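(* For all $\mathcal S,\mathcal S'\in\mathrm{TP}(n)$, $K_{\mathcal S}\cap K_{\mathcal S'}=K_{\mathcal S\cap\mathcal S'}$.
   Context: A rooted tree on leaf set $[n]$ has leaves labeled bijectively by $[n]$ and internal vertices each with at least two children; a clade is the set of leaves below an internal vertex, and $\mathrm{clade}(T)$ is the set of clades (including $[n]$). $\mathrm{TP}(n)$ is the collection of sets of the form $\mathrm{clade}(T_1)\cup\mathrm{clade}(T_2)$ for rooted trees $T_1,T_2$ on leaf set $[n]$. For a family $\mathcal S\subseteq 2^{[n]}$, $\mathcal S^\circ=\mathcal S\setminus\{[n]\}$, and $K_{\mathcal S}=\mathbb{R}(1,\dots,1)^T+\mathrm{cone}\{-v_C: C\in\mathcal S^\circ\}\subseteq\mathbb{R}^{\binom{[n]}{2}}$, where $v_C$ is the characteristic vector of the set $\binom{C}{2}$ of pairs contained in $C$. *)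

theory Defs
  imports Complex_Main
begin

datatype rtree = Leaf nat | Node "rtree list"

fun leaf_list :: "rtree \<Rightarrow> nat list" where
  "leaf_list (Leaf i) = [i]"
| "leaf_list (Node ts) = concat (map leaf_list ts)"

fun wf_rtree :: "rtree \<Rightarrow> bool" where
  "wf_rtree (Leaf i) = True"
| "wf_rtree (Node ts) = (length ts \<ge> 2 \<and> (\<forall>t\<in>set ts. wf_rtree t))"

definition tree_on :: "nat \<Rightarrow> rtree \<Rightarrow> bool" where
  "tree_on n T \<longleftrightarrow> wf_rtree T \<and> distinct (leaf_list T) \<and> set (leaf_list T) = {1..n}"

fun clades :: "rtree \<Rightarrow> nat set set" where
  "clades (Leaf i) = {}"
| "clades (Node ts) = insert (set (leaf_list (Node ts))) (\<Union>t\<in>set ts. clades t)"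

definition TP :: "nat \<Rightarrow> nat set set set" where
  "TP n = {clades T1 \<union> clades T2 | T1 T2. tree_on n T1 \<and> tree_on n T2}"

text \<open>Coordinates: the 2-element subsets of [n]. Vectors in R^(binom [n] 2) are
  functions on these pairs, extended by 0 elsewhere.\<close>
definition pairs :: "nat \<Rightarrow> nat set set" where
  "pairs n = {p. p \<subseteq> {1..n} \<and> card p = 2}"

definition Kcone :: "nat \<Rightarrow> nat set set \<Rightarrow> (nat set \<Rightarrow> real) set" where
  "Kcone n S = {x. \<exists>(c::real) (l::nat set \<Rightarrow> real).
      (\<forall>C \<in> S - {{1..n}}. l C \<ge> 0) \<and>
      x = (\<lambda>p. if p \<in> pairs n
               then c - (\<Sum>C \<in> S - {{1..n}}. l C * (if p \<subseteq> C then 1 else 0))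
               else 0)}"

end

theory Submission
  imports Defs
begin

text \<open>The clades of a rooted tree form a laminar family, so each S in TP(n) is the union
  of two laminar families. The combinatorial core is: if every pair of points of a set C,
  with at least two elements, lies in a member of the union of two laminar families, then
  a single member contains C. Applied to C = [n] it yields a pair covered by no clade other
  than [n]; at that coordinate a point of the cone shows its constant c, the largest of its
  coordinates, so the constants of two representations of a common point agree. The
  nonnegative weights then give every pair the same load. At an inclusion-maximal clade C
  where the two weightings differ, the one with the larger weight on C must compensate,
  on every pair inside C, by clades of its own family not containing C; by the core fact,
  one of them contains C after all. So the weights agree, and vanish outside S \<inter> S'.\<close>

definition laminar :: "'a set set \<Rightarrow> bool" where
  "laminar F \<longleftrightarrow> (\<forall>C\<in>F. \<forall>D\<in>F. C \<subseteq> D \<or> D \<subseteq> C \<or> C \<inter> D = {})"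

lemma laminar_subset: "laminar F \<Longrightarrow> G \<subseteq> F \<Longrightarrow> laminar G"
  unfolding laminar_def by blast

lemma laminar_Un_disjoint:
  assumes "laminar F" "laminar G" "\<Union>F \<subseteq> X" "\<Union>G \<subseteq> Y" "X \<inter> Y = {}"
  shows "laminar (F \<union> G)"
  using assms unfolding laminar_def by blast

lemma leaf_list_nonempty: "wf_rtree t \<Longrightarrow> leaf_list t \<noteq> []"
  by (induction t) (auto simp: length_Suc_conv numeral_2_eq_2 le_Suc_eq Suc_le_length_iff)

lemma clade_subset_leaves: "C \<in> clades t \<Longrightarrow> C \<subseteq> set (leaf_list t)"
  by (induction t arbitrary: C) fastforce+

lemma finite_clades: "finite (clades t)"
  by (induction t) auto

lemma length_le_length_concat_map:
  "(\<And>x. x \<in> set xs \<Longrightarrow> f x \<noteq> []) \<Longrightarrow> length xs \<le> length (concat (map f xs))"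
proof (induction xs)
  case (Cons x xs)
  then have "1 \<le> length (f x)"
    by (simp add: Suc_le_eq)
  with Cons show ?case by simp
qed simp

lemma card_clade_ge_2:
  "wf_rtree t \<Longrightarrow> distinct (leaf_list t) \<Longrightarrow> C \<in> clades t \<Longrightarrow> 2 \<le> card C"
proof (induction t arbitrary: C)
  case (Leaf i)
  then show ?case by simp
next
  case (Node ts)
  show ?case
  proof (cases "C = set (leaf_list (Node ts))")
    case True
    have "2 \<le> length ts"
      using Node.prems(1) by simp
    also have "\<dots> \<le> length (leaf_list (Node ts))"
      using length_le_length_concat_map[of ts leaf_list] leaf_list_nonempty Node.prems(1) by auto
    also have "\<dots> = card C"
      using True Node.prems(2) by (metis distinct_card)
    finally show ?thesis .
  next
    case False
    then obtain t where "t \<in> set ts" "C \<in> clades t"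
      using Node.prems(3) by auto
    with Node show ?thesis by (auto simp: distinct_concat_iff)
  qed
qed

lemma laminar_UN_clades:
  "(\<And>t. t \<in> set ts \<Longrightarrow> laminar (clades t)) \<Longrightarrow> distinct (concat (map leaf_list ts))
    \<Longrightarrow> laminar (\<Union>t\<in>set ts. clades t)"
proof (induction ts)
  case Nil
  then show ?case by (simp add: laminar_def)
next
  case (Cons t ts)
  have "laminar (clades t \<union> (\<Union>u\<in>set ts. clades u))"
  proof (rule laminar_Un_disjoint)
    show "\<Union>(clades t) \<subseteq> set (leaf_list t)" "\<Union>(\<Union>u\<in>set ts. clades u) \<subseteq> set (concat (map leaf_list ts))"
      using clade_subset_leaves by fastforce+
  qed (use Cons in auto)
  then show ?case by simp
qed

lemma laminar_clades: "wf_rtree t \<Longrightarrow> distinct (leaf_list t) \<Longrightarrow> laminar (clades t)"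
proof (induction t)
  case (Leaf i)
  then show ?case by (simp add: laminar_def)
next
  case (Node ts)
  then have "laminar (\<Union>t\<in>set ts. clades t)"
    by (intro laminar_UN_clades) (auto simp: distinct_concat_iff)
  moreover have "\<Union>(\<Union>t\<in>set ts. clades t) \<subseteq> set (leaf_list (Node ts))"
    using clade_subset_leaves by fastforce
  ultimately show ?case
    unfolding clades.simps(2) laminar_def by blast
qed

lemma laminar_star_cover:
  assumes "laminar H" "finite C" "i \<in> C" "C - {i} \<noteq> {}"
    and joined: "\<forall>j\<in>C - {i}. \<exists>D\<in>H. i \<in> D \<and> j \<in> D"
  shows "\<exists>D\<in>H. C \<subseteq> D"
proof -
  obtain f where f: "\<forall>j\<in>C - {i}. f j \<in> H \<and> i \<in> f j \<and> j \<in> f j"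
    using joined by metis
  have "finite (f ` (C - {i}))" "f ` (C - {i}) \<noteq> {}"
    using assms(2,4) by auto
  then obtain M where M: "M \<in> f ` (C - {i})" and max: "\<forall>E\<in>f ` (C - {i}). M \<subseteq> E \<longrightarrow> M = E"
    using finite_has_maximal by metis
  have "M \<in> H" "i \<in> M"
    using M f by auto
  \<comment> \<open>Members of a laminar family sharing the point i form a chain, so M is the largest f j.\<close>
  have "f j \<subseteq> M" if "j \<in> C - {i}" for j
  proof -
    have "f j \<in> H" "i \<in> f j"
      using that f by auto
    then have "f j \<subseteq> M \<or> M \<subseteq> f j"
      using \<open>M \<in> H\<close> \<open>i \<in> M\<close> assms(1) unfolding laminar_def by blast
    then show ?thesis
      using max that by blast
  qed
  then have "C \<subseteq> M"
    using f \<open>i \<in> M\<close> by blast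
  with \<open>M \<in> H\<close> show ?thesis by blast
qed

lemma laminar_pair_cover:
  assumes "laminar H1" "laminar H2" "finite C" "2 \<le> card C"
    and pairs_covered: "\<forall>a\<in>C. \<forall>b\<in>C. a \<noteq> b \<longrightarrow> (\<exists>D\<in>H1 \<union> H2. a \<in> D \<and> b \<in> D)"
  shows "\<exists>D\<in>H1 \<union> H2. C \<subseteq> D"
proof (rule ccontr)
  assume uncovered: "\<not> (\<exists>D\<in>H1 \<union> H2. C \<subseteq> D)"
  obtain i where "i \<in> C"
    using assms(4) by fastforce
  moreover have "C - {i} \<noteq> {}"
  proof
    assume "C - {i} = {}"
    with \<open>i \<in> C\<close> have "C = {i}" by blast
    with assms(4) show False by simp
  qed
  ultimately have i: "i \<in> C" "C - {i} \<noteq> {}" .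
  obtain j where j: "j \<in> C - {i}" "\<forall>D\<in>H1. i \<in> D \<longrightarrow> j \<notin> D"
    using laminar_star_cover[OF assms(1,3) i] uncovered by blast
  obtain k where k: "k \<in> C - {i}" "\<forall>D\<in>H2. i \<in> D \<longrightarrow> k \<notin> D"
    using laminar_star_cover[OF assms(2,3) i] uncovered by blast
  obtain E1 where E1: "E1 \<in> H1" "i \<in> E1" "k \<in> E1"
    using pairs_covered i k j by blast
  obtain E2 where E2: "E2 \<in> H2" "i \<in> E2" "j \<in> E2"
    using pairs_covered i j k by blast
  have "j \<noteq> k"
    using E1 j by blast
  then obtain D where D: "D \<in> H1 \<union> H2" "j \<in> D" "k \<in> D"
    using pairs_covered j k by blast
  \<comment> \<open>D meets E1 (in k) or E2 (in j), whichever lies in its own family; nested with it,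
    D would join i to j within H1 or i to k within H2.\<close>
  show False
  proof (cases "D \<in> H1")
    case True
    then have "D \<subseteq> E1 \<or> E1 \<subseteq> D"
      using E1 D(3) assms(1) unfolding laminar_def by blast
    then show False
      using D E1 j(2) True by blast
  next
    case False
    with D(1) have "D \<in> H2" by blast
    then have "D \<subseteq> E2 \<or> E2 \<subseteq> D"
      using E2 D(2) assms(2) unfolding laminar_def by blast
    then show False
      using D E2 k(2) \<open>D \<in> H2\<close> by blast
  qed
qed

text \<open>All that the proof uses about a member of TP n.\<close>

definition bilaminar :: "nat \<Rightarrow> nat set set \<Rightarrow> bool" where
  "bilaminar n S \<longleftrightarrow> finite S \<and> (\<forall>C\<in>S. C \<subseteq> {1..n} \<and> 2 \<le> card C)
     \<and> (\<exists>A B. S = A \<union> B \<and> laminar A \<and> laminar B)"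

lemma bilaminar_subset:
  assumes "bilaminar n S" "R \<subseteq> S"
  shows "bilaminar n R"
proof -
  obtain A B where "S = A \<union> B" "laminar A" "laminar B"
    using assms(1) unfolding bilaminar_def by blast
  then have "R = (A \<inter> R) \<union> (B \<inter> R)" "laminar (A \<inter> R)" "laminar (B \<inter> R)"
    using assms(2) laminar_subset[of A] laminar_subset[of B] by auto
  then show ?thesis
    using assms finite_subset unfolding bilaminar_def by blast
qed

lemma TP_bilaminar:
  assumes "S \<in> TP n"
  shows "bilaminar n S"
proof -
  obtain T1 T2 where S: "S = clades T1 \<union> clades T2" and T: "tree_on n T1" "tree_on n T2"
    using assms unfolding TP_def by blast
  have "laminar (clades T) \<and> (\<forall>C\<in>clades T. C \<subseteq> {1..n} \<and> 2 \<le> card C)" if "tree_on n T" for T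
  proof -
    have "wf_rtree T" "distinct (leaf_list T)" "set (leaf_list T) = {1..n}"
      using that unfolding tree_on_def by auto
    then show ?thesis
      using laminar_clades clade_subset_leaves card_clade_ge_2 by blast
  qed
  with T show ?thesis
    unfolding S bilaminar_def by (auto simp: finite_clades)
qed

lemma pairs_empty:
  assumes "n < 2"
  shows "pairs n = {}"
proof (rule equals0I)
  fix p
  assume "p \<in> pairs n"
  then have "card p = 2" "p \<subseteq> {1..n}"
    unfolding pairs_def by simp_all
  then have "2 \<le> n"
    using card_mono[of "{1..n}" p] by simp
  with assms show False by simp
qed

lemma doubleton_in_pairs: "a \<in> C \<Longrightarrow> b \<in> C \<Longrightarrow> a \<noteq> b \<Longrightarrow> C \<subseteq> {1..n} \<Longrightarrow> {a, b} \<in> pairs n"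
  unfolding pairs_def by auto

lemma bilaminar_uncovered_pair:
  assumes "bilaminar n S" "2 \<le> n"
  obtains p where "p \<in> pairs n" "\<forall>D\<in>S - {{1..n}}. \<not> p \<subseteq> D"
proof -
  obtain A B where S: "S = A \<union> B" "laminar A" "laminar B" and sub: "\<forall>C\<in>S. C \<subseteq> {1..n}"
    using assms(1) unfolding bilaminar_def by blast
  have "laminar (A - {{1..n}})" "laminar (B - {{1..n}})"
    using S laminar_subset by blast+
  moreover have "\<not> (\<exists>D\<in>(A - {{1..n}}) \<union> (B - {{1..n}}). {1..n} \<subseteq> D)"
    using S(1) sub by blast
  moreover have "finite {1..n}" "2 \<le> card {1..n}"
    using assms(2) by simp_all
  ultimately obtain a b where "a \<in> {1..n}" "b \<in> {1..n}" "a \<noteq> b"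
      "\<not> (\<exists>D\<in>(A - {{1..n}}) \<union> (B - {{1..n}}). a \<in> D \<and> b \<in> D)"
    using laminar_pair_cover by meson
  then show ?thesis
    using that[of "{a, b}"] doubleton_in_pairs[of a "{1..n}" b n] S(1) by blast
qed

definition pair_load :: "nat set set \<Rightarrow> (nat set \<Rightarrow> real) \<Rightarrow> nat set \<Rightarrow> real" where
  "pair_load F l p = (\<Sum>C\<in>F. l C * (if p \<subseteq> C then 1 else 0))"

lemma mem_Kcone_iff:
  "x \<in> Kcone n S \<longleftrightarrow> (\<exists>c l. (\<forall>C\<in>S - {{1..n}}. 0 \<le> l C) \<and>
     x = (\<lambda>p. if p \<in> pairs n then c - pair_load (S - {{1..n}}) l p else 0))"
  unfolding Kcone_def pair_load_def by blast

lemma pair_load_nonneg: "(\<And>C. C \<in> F \<Longrightarrow> p \<subseteq> C \<Longrightarrow> 0 \<le> l C) \<Longrightarrow> 0 \<le> pair_load F l p"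
  unfolding pair_load_def by (auto intro: sum_nonneg)

lemma pair_load_uncovered: "(\<And>C. C \<in> F \<Longrightarrow> \<not> p \<subseteq> C) \<Longrightarrow> pair_load F l p = 0"
  unfolding pair_load_def by (auto intro: sum.neutral)

lemma pair_load_diff: "pair_load F (\<lambda>C. f C - g C) p = pair_load F f p - pair_load F g p"
  unfolding pair_load_def by (simp add: left_diff_distrib sum_subtractf)

lemma pair_load_uminus: "pair_load F (\<lambda>C. - l C) p = - pair_load F l p"
  unfolding pair_load_def by (simp add: sum_negf)

lemma pair_load_restrict:
  "finite F \<Longrightarrow> G \<subseteq> F \<Longrightarrow> (\<And>C. C \<in> F - G \<Longrightarrow> l C = 0) \<Longrightarrow> pair_load F l p = pair_load G l p"
  unfolding pair_load_def by (rule sum.mono_neutral_right) auto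

lemma pair_load_extend:
  assumes "finite F" "G \<subseteq> F"
  shows "pair_load F (\<lambda>C. if C \<in> G then l C else 0) p = pair_load G l p"
proof -
  have "pair_load F (\<lambda>C. if C \<in> G then l C else 0) p = pair_load G (\<lambda>C. if C \<in> G then l C else 0) p"
    using assms by (intro pair_load_restrict) auto
  also have "\<dots> = pair_load G l p"
    unfolding pair_load_def by (rule sum.cong) auto
  finally show ?thesis .
qed

lemma Kcone_mono:
  assumes "finite S" "R \<subseteq> S"
  shows "Kcone n R \<subseteq> Kcone n S"
proof
  fix x
  assume "x \<in> Kcone n R"
  then obtain c l where l: "\<forall>C\<in>R - {{1..n}}. 0 \<le> l C"
    and x: "x = (\<lambda>p. if p \<in> pairs n then c - pair_load (R - {{1..n}}) l p else 0)"
    unfolding mem_Kcone_iff by blast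
  define l' where "l' C = (if C \<in> R - {{1..n}} then l C else 0)" for C
  have load: "pair_load (S - {{1..n}}) l' p = pair_load (R - {{1..n}}) l p" for p
    unfolding l'_def using assms by (intro pair_load_extend) auto
  have "x = (\<lambda>p. if p \<in> pairs n then c - pair_load (S - {{1..n}}) l' p else 0)"
    unfolding x load ..
  moreover have "\<forall>C\<in>S - {{1..n}}. 0 \<le> l' C"
    using l unfolding l'_def by simp
  ultimately show "x \<in> Kcone n S"
    unfolding mem_Kcone_iff by blast
qed

lemma Kcone_degenerate:
  assumes "n < 2"
  shows "Kcone n S = {\<lambda>_. 0}"
proof -
  have "x \<in> Kcone n S \<longleftrightarrow> x = (\<lambda>_. 0)" for x
    unfolding mem_Kcone_iff pairs_empty[OF assms] by force
  then show ?thesis by blast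
qed

lemma positive_weight_has_weighted_superset:
  fixes d :: "nat set \<Rightarrow> real"
  assumes "finite U" "laminar H1" "laminar H2"
    and negative: "\<forall>D\<in>U. d D < 0 \<longrightarrow> D \<in> H1 \<union> H2"
    and balanced: "\<forall>p\<in>pairs n. pair_load U d p = 0"
    and C: "C \<in> U" "C \<subseteq> {1..n}" "2 \<le> card C" "0 < d C"
  shows "\<exists>D\<in>U. C \<subset> D \<and> d D \<noteq> 0"
proof (rule ccontr)
  assume "\<not> ?thesis"
  then have above_C: "\<forall>D\<in>U. C \<subset> D \<longrightarrow> d D = 0"
    by blast
  \<comment> \<open>For a pair p inside C, the supersets of C contribute exactly d C > 0 to the load of p,
    so some negatively weighted member containing p but not C must compensate.\<close>
  define H1' where "H1' = {D\<in>H1. \<not> C \<subseteq> D}"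
  define H2' where "H2' = {D\<in>H2. \<not> C \<subseteq> D}"
  have "\<exists>D\<in>H1' \<union> H2'. a \<in> D \<and> b \<in> D" if ab: "a \<in> C" "b \<in> C" "a \<noteq> b" for a b
  proof -
    let ?p = "{a, b}"
    have "pair_load (U \<inter> {D. C \<subseteq> D}) d ?p = pair_load {C} d ?p"
      using assms(1) C(1) above_C by (intro pair_load_restrict) auto
    also have "\<dots> = d C"
      using ab unfolding pair_load_def by simp
    finally have "pair_load (U \<inter> {D. C \<subseteq> D}) d ?p = d C" .
    moreover have "pair_load U d ?p = 0"
      using balanced doubleton_in_pairs[OF ab C(2)] by blast
    moreover have "pair_load U d ?p
        = pair_load (U \<inter> {D. C \<subseteq> D}) d ?p + pair_load (U - {D. C \<subseteq> D}) d ?p"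
      unfolding pair_load_def using assms(1) by (rule sum.Int_Diff)
    ultimately have "\<not> 0 \<le> pair_load (U - {D. C \<subseteq> D}) d ?p"
      using C(4) by linarith
    then obtain D where "D \<in> U - {D. C \<subseteq> D}" "?p \<subseteq> D" "d D < 0"
      using pair_load_nonneg[of "U - {D. C \<subseteq> D}" ?p d] by force
    then show ?thesis
      using negative unfolding H1'_def H2'_def by blast
  qed
  moreover have "laminar H1'" "laminar H2'"
    unfolding H1'_def H2'_def
    by (rule laminar_subset[OF assms(2)], blast) (rule laminar_subset[OF assms(3)], blast)
  moreover have "finite C"
    using C(2) finite_subset by auto
  ultimately obtain D where "D \<in> H1' \<union> H2'" "C \<subseteq> D"
    using laminar_pair_cover C(3) by meson
  then show False
    unfolding H1'_def H2'_def by blast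
qed

lemma bilaminar_balanced_weight_zero:
  fixes d :: "nat set \<Rightarrow> real"
  assumes "finite U" "bilaminar n P" "bilaminar n N"
    and positive: "\<forall>D\<in>U. 0 < d D \<longrightarrow> D \<in> P"
    and negative: "\<forall>D\<in>U. d D < 0 \<longrightarrow> D \<in> N"
    and balanced: "\<forall>p\<in>pairs n. pair_load U d p = 0"
  shows "\<forall>D\<in>U. d D = 0"
proof (rule ccontr)
  assume "\<not> ?thesis"
  then have "{D\<in>U. d D \<noteq> 0} \<noteq> {}" "finite {D\<in>U. d D \<noteq> 0}"
    using assms(1) by auto
  then obtain C where "C \<in> {D\<in>U. d D \<noteq> 0}"
    and "\<forall>E\<in>{D\<in>U. d D \<noteq> 0}. C \<subseteq> E \<longrightarrow> C = E"
    using finite_has_maximal by blast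
  then have C: "C \<in> U" "d C \<noteq> 0" and maximal: "\<not> (\<exists>D\<in>U. C \<subset> D \<and> d D \<noteq> 0)"
    by auto
  obtain A B where "P = A \<union> B" "laminar A" "laminar B"
    using assms(2) unfolding bilaminar_def by blast
  obtain A' B' where "N = A' \<union> B'" "laminar A'" "laminar B'"
    using assms(3) unfolding bilaminar_def by blast
  consider "0 < d C" | "d C < 0"
    using C(2) by linarith
  then show False
  proof cases
    case 1
    then have "C \<subseteq> {1..n}" "2 \<le> card C"
      using C(1) positive assms(2) unfolding bilaminar_def by auto
    with C(1) 1 have "\<exists>D\<in>U. C \<subset> D \<and> d D \<noteq> 0"
      using \<open>N = A' \<union> B'\<close> negative
      by (intro positive_weight_has_weighted_superset[OF assms(1) \<open>laminar A'\<close> \<open>laminar B'\<close> _ balanced])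
        auto
    with maximal show False ..
  next
    case 2
    then have "C \<subseteq> {1..n}" "2 \<le> card C"
      using C(1) negative assms(3) unfolding bilaminar_def by auto
    moreover have "\<forall>p\<in>pairs n. pair_load U (\<lambda>D. - d D) p = 0"
      using balanced by (simp add: pair_load_uminus)
    ultimately have "\<exists>D\<in>U. C \<subset> D \<and> - d D \<noteq> 0"
      using C(1) 2 \<open>P = A \<union> B\<close> positive
      by (intro positive_weight_has_weighted_superset[OF assms(1) \<open>laminar A\<close> \<open>laminar B\<close>])
        auto
    with maximal show False
      by auto
  qed
qed

lemma bilaminar_pair_load_eq_imp_weight_zero:
  assumes "bilaminar n F" "bilaminar n F'"
    and nonneg: "\<forall>C\<in>F. 0 \<le> l C" "\<forall>C\<in>F'. 0 \<le> l' C"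
    and loads: "\<forall>p\<in>pairs n. pair_load F l p = pair_load F' l' p"
  shows "\<forall>C\<in>F - F'. l C = 0"
proof -
  define d where "d C = (if C \<in> F then l C else 0) - (if C \<in> F' then l' C else 0)" for C
  have fin: "finite (F \<union> F')"
    using assms(1,2) unfolding bilaminar_def by blast
  have "pair_load (F \<union> F') d p = pair_load F l p - pair_load F' l' p" for p
    unfolding d_def pair_load_diff using fin by (simp add: pair_load_extend)
  with loads have "\<forall>p\<in>pairs n. pair_load (F \<union> F') d p = 0"
    by simp
  moreover have "\<forall>C\<in>F \<union> F'. 0 < d C \<longrightarrow> C \<in> F" "\<forall>C\<in>F \<union> F'. d C < 0 \<longrightarrow> C \<in> F'"
    using nonneg unfolding d_def by (auto split: if_splits)
  ultimately have "\<forall>C\<in>F \<union> F'. d C = 0"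
    using bilaminar_balanced_weight_zero[OF fin assms(1,2)] by blast
  then show ?thesis
    unfolding d_def by (metis DiffE UnI1 diff_zero)
qed

lemma bilaminar_cone_constant_le:
  assumes "bilaminar n S" "2 \<le> n" "\<forall>C\<in>F'. 0 \<le> l' C"
    and "\<And>p. p \<in> pairs n \<Longrightarrow> c - pair_load (S - {{1..n}}) l p = c' - pair_load F' l' p"
  shows "c \<le> c'"
proof -
  obtain p where p: "p \<in> pairs n" "\<forall>D\<in>S - {{1..n}}. \<not> p \<subseteq> D"
    using bilaminar_uncovered_pair[OF assms(1,2)] by blast
  have "pair_load (S - {{1..n}}) l p = 0"
    using p(2) by (intro pair_load_uncovered) blast
  moreover have "c - pair_load (S - {{1..n}}) l p = c' - pair_load F' l' p"
    using assms(4)[OF p(1)] .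
  moreover have "0 \<le> pair_load F' l' p"
    using assms(3) by (simp add: pair_load_nonneg)
  ultimately show ?thesis by linarith
qed

lemma Kcone_Int_subset:
  assumes "bilaminar n S" "bilaminar n S'"
  shows "Kcone n S \<inter> Kcone n S' \<subseteq> Kcone n (S \<inter> S')"
proof
  fix x
  assume x: "x \<in> Kcone n S \<inter> Kcone n S'"
  show "x \<in> Kcone n (S \<inter> S')"
  proof (cases "n < 2")
    case True
    with x show ?thesis
      by (simp add: Kcone_degenerate)
  next
    case False
    define F F' where "F = S - {{1..n}}" and "F' = S' - {{1..n}}"
    obtain c l c' l' where nonneg: "\<forall>C\<in>F. 0 \<le> l C" "\<forall>C\<in>F'. 0 \<le> l' C"
      and xl: "x = (\<lambda>p. if p \<in> pairs n then c - pair_load F l p else 0)"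
      and xl': "x = (\<lambda>p. if p \<in> pairs n then c' - pair_load F' l' p else 0)"
      using x unfolding Int_iff mem_Kcone_iff F_def F'_def by blast
    have "bilaminar n F" "bilaminar n F'"
      unfolding F_def F'_def
      by (rule bilaminar_subset[OF assms(1)], blast) (rule bilaminar_subset[OF assms(2)], blast)
    have loads: "c - pair_load F l p = c' - pair_load F' l' p" if "p \<in> pairs n" for p
      using fun_cong[OF xl, of p] fun_cong[OF xl', of p] that by simp
    have "c \<le> c'"
      using False by (intro bilaminar_cone_constant_le[OF assms(1) _ nonneg(2) loads[unfolded F_def]]) simp
    moreover have "c' \<le> c"
      using False by (intro bilaminar_cone_constant_le[OF assms(2) _ nonneg(1) loads[unfolded F'_def, symmetric]]) simp
    ultimately have "\<forall>p\<in>pairs n. pair_load F l p = pair_load F' l' p"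
      using loads by force
    then have "\<forall>C\<in>F - F'. l C = 0"
      using bilaminar_pair_load_eq_imp_weight_zero \<open>bilaminar n F\<close> \<open>bilaminar n F'\<close> nonneg
      by blast
    then have "pair_load F l p = pair_load ((S \<inter> S') - {{1..n}}) l p" for p
      using assms(1) unfolding F_def F'_def bilaminar_def
      by (intro pair_load_restrict) auto
    then have "x = (\<lambda>p. if p \<in> pairs n then c - pair_load ((S \<inter> S') - {{1..n}}) l p else 0)"
      unfolding xl by presburger
    moreover have "\<forall>C\<in>(S \<inter> S') - {{1..n}}. 0 \<le> l C"
      using nonneg unfolding F_def by blast
    ultimately show ?thesis
      unfolding mem_Kcone_iff by blast
  qed
qed

lemma Kcone_Int_bilaminar:
  assumes "bilaminar n S" "bilaminar n S'"
  shows "Kcone n S \<inter> Kcone n S' = Kcone n (S \<inter> S')"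
proof (rule subset_antisym)
  show "Kcone n S \<inter> Kcone n S' \<subseteq> Kcone n (S \<inter> S')"
    using assms by (rule Kcone_Int_subset)
  have "finite S" "finite S'"
    using assms unfolding bilaminar_def by simp_all
  then show "Kcone n (S \<inter> S') \<subseteq> Kcone n S \<inter> Kcone n S'"
    by (simp add: Kcone_mono)
qed

theorem proposition3p13:
  fixes n :: nat and S S' :: "nat set set"
  assumes "S \<in> TP n" and "S' \<in> TP n"
  shows "Kcone n S \<inter> Kcone n S' = Kcone n (S \<inter> S')"
  using assms by (intro Kcone_Int_bilaminar TP_bilaminar)

end
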